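(* Consider the following chemical reaction network (the ERK cascade with a negative feedback, in which MEK and ERK share the phosphatase PH) with 25 species RAF, pRAF, MEK, pMEK, ppMEK, ERK, pERK, ppERK, RAS, RAFPH, PH, PH2, RAS-RAF, MEK-pRAF, pMEK-pRAF, ERK-ppMEK, pERK-ppMEK, RAF-RAFPH, ppMEK-PH, pMEK-PH, ppERK-PH, pERK-PH, pRAF-ppERK, Z-PH2, Z and 36 reactions with rate constants $k_1,\dots,k_{36}$: RAF + RAS $\underset{k_2}{\overset{k_1}{\rightleftarrows}}$ RAS-RAF $\overset{k_3}{\to}$ pRAF + RAS; pRAF + RAFPH $\underset{k_5}{\overset{k_4}{\rightleftarrows}}$ RAF-RAFPH $\overset{k_6}{\to}$ RAF + RAFPH; MEK + pRAF $\underset{k_8}{\overset{k_7}{\rightleftarrows}}$ MEK-pRAF $\overset{k_9}{\to}$ pMEK + pRAF $\underset{k_{11}}{\overset{k_{10}}{\rightleftarrows}}$ pMEK-pRAF $\overset{k_{12}}{\to}$ ppMEK + pRAF; ppMEK + PH $\underset{k_{14}}{\overset{k_{13}}{\rightleftarrows}}$ ppMEK-PH $\overset{k_{15}}{\to}$ pMEK + PH $\underset{k_{17}}{\overset{k_{16}}{\rightleftarrows}}$ pMEK-PH $\overset{k_{18}}{\to}$ MEK + PH; ERK + ppMEK $\underset{k_{20}}{\overset{k_{19}}{\rightleftarrows}}$ ERK-ppMEK $\overset{k_{21}}{\to}$ pERK + ppMEK $\underset{k_{23}}{\overset{k_{22}}{\rightleftarrows}}$ pERK-ppMEK $\overset{k_{24}}{\to}$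 ppERK + ppMEK; ppERK + PH $\underset{k_{26}}{\overset{k_{25}}{\rightleftarrows}}$ ppERK-PH $\overset{k_{27}}{\to}$ pERK + PH $\underset{k_{29}}{\overset{k_{28}}{\rightleftarrows}}$ pERK-PH $\overset{k_{30}}{\to}$ ERK + PH; pRAF + ppERK $\underset{k_{32}}{\overset{k_{31}}{\rightleftarrows}}$ pRAF-ppERK $\overset{k_{33}}{\to}$ Z + ppERK; Z + PH2 $\underset{k_{35}}{\overset{k_{34}}{\rightleftarrows}}$ Z-PH2 $\overset{k_{36}}{\to}$ pRAF + PH2. Then for every choice of positive rate constants $k\in\mathbb{R}^{36}_{>0}$, the associated mass-action system has toric steady states; in particular its steady state ideal is a binomial ideal.
   Context: For a reaction network with species concentrations $x=(x_1,\dots,x_s)$ and reactions $y\to y'$ (complexes $y,y'\in\mathbb{Z}_{\ge0}^s$, where a complex is a formal sum of species) with positive rate constants, the mass-action system is $\dot x = f(x;k)=\sum_{\text{reactions } y\to y'} k_{y\to y'}\, x^{y}(y'-y)$, whose components $f_1,\dots,f_s$ are polynomials in $x$. The steady state ideal is $J=\langle f_1,\dots,f_s\rangle\subseteq\mathbb{R}[x_1,\dots,x_s]$. The system has toric steady states if $J$ can be generated by binomials (polynomials with at most two terms) and $J$ admits nonnegative zeros. *)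

theory Defs
  imports Complex_Main "HOL-Library.Poly_Mapping"
begin

text \<open>Multivariate real polynomials in variables x_0, x_1, ... (indexed by nat), represented
  as finitely supported maps from monomials (exponent vectors nat =>0 nat) to real coefficients.\<close>

type_synonym mpoly = "(nat \<Rightarrow>\<^sub>0 nat) \<Rightarrow>\<^sub>0 real"

definition pvars :: "mpoly \<Rightarrow> nat set" where
  "pvars p = {i. \<exists>m \<in> Poly_Mapping.keys p. i \<in> Poly_Mapping.keys m}"

definition peval :: "mpoly \<Rightarrow> (nat \<Rightarrow> real) \<Rightarrow> real" where
  "peval p x = (\<Sum>m \<in> Poly_Mapping.keys p. Poly_Mapping.lookup p m * (\<Prod>i \<in> Poly_Mapping.keys m. x i ^ Poly_Mapping.lookup m i))"

definition is_binomial :: "mpoly \<Rightarrow> bool" where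
  "is_binomial p \<longleftrightarrow> card (Poly_Mapping.keys p) \<le> 2"

text \<open>The ideal generated by S inside the polynomial ring R[x_0,...,x_{n-1}].\<close>
definition ideal_in :: "nat \<Rightarrow> mpoly set \<Rightarrow> mpoly set" where
  "ideal_in n S = {(\<Sum>g\<in>F. c g * g) | F c. finite F \<and> F \<subseteq> S \<and>
                       (\<forall>g\<in>F. pvars (c g) \<subseteq> {..<n})}"

definition xmon :: "(nat \<Rightarrow>\<^sub>0 nat) \<Rightarrow> mpoly" where
  "xmon y = Poly_Mapping.single y 1"

text \<open>Mass-action vector field: reactions given as a list of (rate index, source, product);
  component i of f is  sum over reactions of k_r x^y (y'_i - y_i).\<close>
definition mass_action :: "(nat \<Rightarrow> real) \<Rightarrow> (nat \<times> (nat \<Rightarrow>\<^sub>0 nat) \<times> (nat \<Rightarrow>\<^sub>0 nat)) list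
                           \<Rightarrow> nat \<Rightarrow> mpoly" where
  "mass_action k R i = (\<Sum>(r, y, y') \<leftarrow> R.
      Poly_Mapping.single 0 (k r * (real (Poly_Mapping.lookup y' i) - real (Poly_Mapping.lookup y i))) * xmon y)"

definition sp :: "nat \<Rightarrow> (nat \<Rightarrow>\<^sub>0 nat)" where
  "sp i = Poly_Mapping.single i 1"

definition RAF where "RAF = sp 0"
definition pRAF where "pRAF = sp 1"
definition MEK where "MEK = sp 2"
definition pMEK where "pMEK = sp 3"
definition ppMEK where "ppMEK = sp 4"
definition ERK where "ERK = sp 5"
definition pERK where "pERK = sp 6"
definition ppERK where "ppERK = sp 7"
definition RAS where "RAS = sp 8"
definition RAFPH where "RAFPH = sp 9"
definition PH where "PH = sp 10"
definition PH2 where "PH2 = sp 11"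
definition RAS_RAF where "RAS_RAF = sp 12"
definition MEK_pRAF where "MEK_pRAF = sp 13"
definition pMEK_pRAF where "pMEK_pRAF = sp 14"
definition ERK_ppMEK where "ERK_ppMEK = sp 15"
definition pERK_ppMEK where "pERK_ppMEK = sp 16"
definition RAF_RAFPH where "RAF_RAFPH = sp 17"
definition ppMEK_PH where "ppMEK_PH = sp 18"
definition pMEK_PH where "pMEK_PH = sp 19"
definition ppERK_PH where "ppERK_PH = sp 20"
definition pERK_PH where "pERK_PH = sp 21"
definition pRAF_ppERK where "pRAF_ppERK = sp 22"
definition Z_PH2 where "Z_PH2 = sp 23"
definition Z where "Z = sp 24"

definition num_species :: nat where "num_species = 25"

text \<open>The 36 reactions of the ERK cascade with negative feedback; (r, y, y') means y -> y'
  with rate constant k_r.\<close>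
definition erk_reactions :: "(nat \<times> (nat \<Rightarrow>\<^sub>0 nat) \<times> (nat \<Rightarrow>\<^sub>0 nat)) list" where
  "erk_reactions = [
    (1, RAF + RAS, RAS_RAF), (2, RAS_RAF, RAF + RAS), (3, RAS_RAF, pRAF + RAS),
    (4, pRAF + RAFPH, RAF_RAFPH), (5, RAF_RAFPH, pRAF + RAFPH), (6, RAF_RAFPH, RAF + RAFPH),
    (7, MEK + pRAF, MEK_pRAF), (8, MEK_pRAF, MEK + pRAF), (9, MEK_pRAF, pMEK + pRAF),
    (10, pMEK + pRAF, pMEK_pRAF), (11, pMEK_pRAF, pMEK + pRAF), (12, pMEK_pRAF, ppMEK + pRAF),
    (13, ppMEK + PH, ppMEK_PH), (14, ppMEK_PH, ppMEK + PH), (15, ppMEK_PH, pMEK + PH),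
    (16, pMEK + PH, pMEK_PH), (17, pMEK_PH, pMEK + PH), (18, pMEK_PH, MEK + PH),
    (19, ERK + ppMEK, ERK_ppMEK), (20, ERK_ppMEK, ERK + ppMEK), (21, ERK_ppMEK, pERK + ppMEK),
    (22, pERK + ppMEK, pERK_ppMEK), (23, pERK_ppMEK, pERK + ppMEK), (24, pERK_ppMEK, ppERK + ppMEK),
    (25, ppERK + PH, ppERK_PH), (26, ppERK_PH, ppERK + PH), (27, ppERK_PH, pERK + PH),
    (28, pERK + PH, pERK_PH), (29, pERK_PH, pERK + PH), (30, pERK_PH, ERK + PH),
    (31, pRAF + ppERK, pRAF_ppERK), (32, pRAF_ppERK, pRAF + ppERK), (33, pRAF_ppERK, Z + ppERK),
    (34, Z + PH2, Z_PH2), (35, Z_PH2, Z + PH2), (36, Z_PH2, pRAF + PH2)]"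

definition steady_state_ideal :: "nat \<Rightarrow> (nat \<Rightarrow> real) \<Rightarrow>
    (nat \<times> (nat \<Rightarrow>\<^sub>0 nat) \<times> (nat \<Rightarrow>\<^sub>0 nat)) list \<Rightarrow> mpoly set" where
  "steady_state_ideal s k R = ideal_in s {mass_action k R i | i. i < s}"

definition has_toric_steady_states :: "nat \<Rightarrow> (nat \<Rightarrow> real) \<Rightarrow>
    (nat \<times> (nat \<Rightarrow>\<^sub>0 nat) \<times> (nat \<Rightarrow>\<^sub>0 nat)) list \<Rightarrow> bool" where
  "has_toric_steady_states s k R \<longleftrightarrow>
     (\<exists>B. (\<forall>b\<in>B. is_binomial b \<and> pvars b \<subseteq> {..<s}) \<and>
          ideal_in s B = steady_state_ideal s k R) \<and>
     (\<exists>x::nat \<Rightarrow> real. (\<forall>i<s. 0 \<le> x i) \<and> (\<forall>p \<in> steady_state_ideal s k R. peval p x = 0))"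

end

theory Submission
  imports Defs
begin

text \<open>Each intermediate complex (species 12--23) is formed by one reaction and consumed by two,
  so its mass-action component is already a binomial. Summing the components of a free species
  and of the complexes it is bound in cancels every reaction that preserves the total of the
  group; only the two reactions leaving the group survive, e.g.
  \<open>f\<^sub>RAF + f\<^sub>RAS-RAF = k\<^sub>6 x\<^sub>RAF-RAFPH - k\<^sub>3 x\<^sub>RAS-RAF\<close>.
  The remaining components are eliminated with the conservation laws (totals of RAS, RAFPH, PH,
  PH2, RAF, MEK and ERK), whose sums of components vanish identically. As no reaction has the empty complex as source, no
  polynomial in the ideal has a constant term, and \<open>x = 0\<close> is a nonnegative steady state.\<close>

lemma pvars_add: "pvars (p + q) \<subseteq> pvars p \<union> pvars q"
  unfolding pvars_def using keys_add by fastforce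

lemma pvars_mult: "pvars (p * q) \<subseteq> pvars p \<union> pvars q"
proof
  fix i assume "i \<in> pvars (p * q)"
  then obtain m where m: "m \<in> Poly_Mapping.keys (p * q)" "i \<in> Poly_Mapping.keys m"
    unfolding pvars_def by auto
  then obtain a b where "m = a + b" "a \<in> Poly_Mapping.keys p" "b \<in> Poly_Mapping.keys q"
    using keys_mult by blast
  with m(2) keys_add[of a b] show "i \<in> pvars p \<union> pvars q"
    unfolding pvars_def by auto
qed

lemma pvars_zero [simp]: "pvars 0 = {}" and pvars_uminus_one [simp]: "pvars (- 1) = {}"
  unfolding pvars_def by simp_all

lemma ideal_in_generator: "p \<in> S \<Longrightarrow> p \<in> ideal_in n S"
  unfolding ideal_in_def by (intro CollectI exI[of _ "{p}"] exI[of _ "\<lambda>_. 1"]) (simp add: pvars_def)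

lemma ideal_in_zero: "0 \<in> ideal_in n S"
  unfolding ideal_in_def by (intro CollectI exI[of _ "{}"]) simp

lemma ideal_in_add:
  assumes "p \<in> ideal_in n S" "q \<in> ideal_in n S"
  shows "p + q \<in> ideal_in n S"
proof -
  obtain F c where p: "p = (\<Sum>g\<in>F. c g * g)" "finite F" "F \<subseteq> S" "\<forall>g\<in>F. pvars (c g) \<subseteq> {..<n}"
    using assms(1) unfolding ideal_in_def by blast
  obtain G d where q: "q = (\<Sum>g\<in>G. d g * g)" "finite G" "G \<subseteq> S" "\<forall>g\<in>G. pvars (d g) \<subseteq> {..<n}"
    using assms(2) unfolding ideal_in_def by blast
  define e where "e g = (if g \<in> F then c g else 0) + (if g \<in> G then d g else 0)" for g
  have "(\<Sum>g\<in>F \<union> G. e g * g) =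
      (\<Sum>g\<in>F \<union> G. if g \<in> F then c g * g else 0) + (\<Sum>g\<in>F \<union> G. if g \<in> G then d g * g else 0)"
    unfolding sum.distrib[symmetric] by (rule sum.cong) (simp_all add: e_def distrib_right)
  also have "\<dots> = p + q"
    using p q by (simp add: sum.If_cases Int_absorb1)
  finally have "p + q = (\<Sum>g\<in>F \<union> G. e g * g)" ..
  moreover have "pvars (e g) \<subseteq> {..<n}" if "g \<in> F \<union> G" for g
  proof -
    have "pvars (if g \<in> F then c g else 0) \<subseteq> {..<n}" "pvars (if g \<in> G then d g else 0) \<subseteq> {..<n}"
      using p(4) q(4) by auto
    then show ?thesis
      using pvars_add unfolding e_def by blast
  qed
  ultimately show ?thesis
    unfolding ideal_in_def using p(2,3) q(2,3) by (intro CollectI exI[of _ "F \<union> G"] exI[of _ e]) auto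
qed

lemma ideal_in_mult:
  assumes "p \<in> ideal_in n S" "pvars d \<subseteq> {..<n}"
  shows "d * p \<in> ideal_in n S"
proof -
  obtain F c where p: "p = (\<Sum>g\<in>F. c g * g)" "finite F" "F \<subseteq> S" "\<forall>g\<in>F. pvars (c g) \<subseteq> {..<n}"
    using assms(1) unfolding ideal_in_def by blast
  have "d * p = (\<Sum>g\<in>F. (d * c g) * g)"
    using p(1) by (simp add: sum_distrib_left mult.assoc)
  moreover have "\<forall>g\<in>F. pvars (d * c g) \<subseteq> {..<n}"
    using p(4) assms(2) pvars_mult by blast
  ultimately show ?thesis
    unfolding ideal_in_def using p(2,3) by (intro CollectI exI[of _ F] exI[of _ "\<lambda>g. d * c g"]) auto
qed

lemma ideal_in_diff: "p \<in> ideal_in n S \<Longrightarrow> q \<in> ideal_in n S \<Longrightarrow> p - q \<in> ideal_in n S"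
  using ideal_in_add[of p n S "- 1 * q"] ideal_in_mult[of q n S "- 1"] by simp

lemma ideal_in_sum:
  "finite I \<Longrightarrow> (\<And>i. i \<in> I \<Longrightarrow> f i \<in> ideal_in n S) \<Longrightarrow> (\<Sum>i\<in>I. f i) \<in> ideal_in n S"
  by (induction I rule: finite_induct) (auto intro: ideal_in_zero ideal_in_add)

lemma ideal_in_summand:
  assumes "finite I" "i \<in> I" "(\<Sum>j\<in>I. f j) \<in> ideal_in n S"
    and "\<And>j. j \<in> I - {i} \<Longrightarrow> f j \<in> ideal_in n S"
  shows "f i \<in> ideal_in n S"
proof -
  have "f i = (\<Sum>j\<in>I. f j) - (\<Sum>j\<in>I - {i}. f j)"
    using assms(1,2) by (simp add: sum.remove)
  then show ?thesis
    using assms by (auto intro: ideal_in_diff ideal_in_sum)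
qed

lemma ideal_in_ideal_in: "ideal_in n (ideal_in n S) = ideal_in n S"
proof
  show "ideal_in n (ideal_in n S) \<subseteq> ideal_in n S"
  proof
    fix p assume "p \<in> ideal_in n (ideal_in n S)"
    then obtain F c where p: "p = (\<Sum>g\<in>F. c g * g)" "finite F" "F \<subseteq> ideal_in n S"
        "\<forall>g\<in>F. pvars (c g) \<subseteq> {..<n}"
      unfolding ideal_in_def by blast
    then show "p \<in> ideal_in n S"
      by (auto intro!: ideal_in_sum ideal_in_mult)
  qed
qed (auto intro: ideal_in_generator)

lemma ideal_in_mono: "S \<subseteq> T \<Longrightarrow> ideal_in n S \<subseteq> ideal_in n T"
  unfolding ideal_in_def by blast

lemma ideal_in_eqI:
  assumes "S \<subseteq> ideal_in n T" "T \<subseteq> ideal_in n S"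
  shows "ideal_in n S = ideal_in n T"
  using ideal_in_mono[OF assms(1)] ideal_in_mono[OF assms(2)] ideal_in_ideal_in by blast

definition amount :: "nat set \<Rightarrow> (nat \<Rightarrow>\<^sub>0 nat) \<Rightarrow> nat" where
  "amount I y = (\<Sum>i\<in>I. Poly_Mapping.lookup y i)"

lemma amount_add [simp]: "amount I (y + z) = amount I y + amount I z"
  by (simp add: amount_def lookup_add sum.distrib)

lemma single_sum: "Poly_Mapping.single m (\<Sum>i\<in>I. g i) = (\<Sum>i\<in>I. Poly_Mapping.single m (g i))"
  by (induction I rule: infinite_finite_induct) (simp_all add: single_add)

lemma mass_action_Nil [simp]: "mass_action k [] i = 0"
  by (simp add: mass_action_def)

lemma mass_action_Cons [simp]:
  "mass_action k ((r, y, y') # R) i =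
     Poly_Mapping.single y (k r * (real (Poly_Mapping.lookup y' i) - real (Poly_Mapping.lookup y i)))
     + mass_action k R i"
  by (simp add: mass_action_def xmon_def mult_single)

lemma sum_mass_action:
  "(\<Sum>i\<in>I. mass_action k R i) =
     (\<Sum>(r, y, y')\<leftarrow>R. Poly_Mapping.single y (k r * (real (amount I y') - real (amount I y))))"
proof (induction R)
  case (Cons reaction R)
  obtain r y y' where "reaction = (r, y, y')"
    by (cases reaction) auto
  moreover have "(\<Sum>i\<in>I. k r * (real (Poly_Mapping.lookup y' i) - real (Poly_Mapping.lookup y i)))
      = k r * (real (amount I y') - real (amount I y))"
    by (simp add: amount_def sum_distrib_left sum_subtractf right_diff_distrib)
  ultimately show ?case
    using Cons by (simp add: sum.distrib single_sum[symmetric])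
qed simp

lemma keys_sum_mass_action:
  assumes "\<And>r y y'. (r, y, y') \<in> set R \<Longrightarrow> y \<notin> A \<Longrightarrow> amount I y' = amount I y"
  shows "Poly_Mapping.keys (\<Sum>i\<in>I. mass_action k R i) \<subseteq> A"
  unfolding sum_mass_action using assms
proof (induction R)
  case (Cons reaction R)
  obtain r y y' where reaction: "reaction = (r, y, y')"
    by (cases reaction) auto
  have "Poly_Mapping.keys (Poly_Mapping.single y (k r * (real (amount I y') - real (amount I y)))) \<subseteq> A"
    using Cons.prems[of r y y'] by (cases "y \<in> A") (auto simp: reaction)
  moreover have "Poly_Mapping.keys (\<Sum>(r, y, y')\<leftarrow>R.
      Poly_Mapping.single y (k r * (real (amount I y') - real (amount I y)))) \<subseteq> A"
    using Cons.prems by (intro Cons.IH) auto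
  ultimately show ?case
    using keys_add by (force simp: reaction)
qed simp

lemma sum_mass_action_eq_0:
  assumes "\<And>r y y'. (r, y, y') \<in> set R \<Longrightarrow> amount I y' = amount I y"
  shows "(\<Sum>i\<in>I. mass_action k R i) = 0"
  using keys_sum_mass_action[of R "{}"] assms by simp

lemma lookup_mass_action_0:
  assumes "\<And>r y y'. (r, y, y') \<in> set R \<Longrightarrow> y \<noteq> 0"
  shows "Poly_Mapping.lookup (mass_action k R i) 0 = 0"
proof -
  have "Poly_Mapping.keys (\<Sum>j\<in>{i}. mass_action k R j) \<subseteq> - {0}"
    using assms by (intro keys_sum_mass_action) auto
  then show ?thesis
    by (auto simp: in_keys_iff)
qed

lemma lookup_mult_0:
  fixes p q :: mpoly
  assumes "Poly_Mapping.lookup q 0 = 0"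
  shows "Poly_Mapping.lookup (p * q) 0 = 0"
proof (rule ccontr)
  assume "Poly_Mapping.lookup (p * q) 0 \<noteq> 0"
  then have "0 \<in> Poly_Mapping.keys (p * q)"
    by (simp add: in_keys_iff)
  then obtain a b where ab: "0 = a + b" "b \<in> Poly_Mapping.keys q"
    using keys_mult by blast
  have "b = 0"
  proof (rule poly_mapping_eqI)
    fix i
    have "Poly_Mapping.lookup a i + Poly_Mapping.lookup b i = 0"
      by (metis ab(1) lookup_add lookup_zero)
    then show "Poly_Mapping.lookup b i = Poly_Mapping.lookup 0 i"
      by simp
  qed
  with ab(2) assms show False
    by (simp add: in_keys_iff)
qed

lemma lookup_ideal_in_0:
  assumes "p \<in> ideal_in n S" "\<And>g. g \<in> S \<Longrightarrow> Poly_Mapping.lookup g 0 = 0"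
  shows "Poly_Mapping.lookup p 0 = 0"
  using assms unfolding ideal_in_def by (auto simp: lookup_sum subset_iff intro!: sum.neutral lookup_mult_0)

lemma peval_0: "peval p (\<lambda>_. 0) = Poly_Mapping.lookup p 0"
proof -
  have "peval p (\<lambda>_. 0) = (\<Sum>m\<in>Poly_Mapping.keys p. if m = 0 then Poly_Mapping.lookup p m else 0)"
    unfolding peval_def
  proof (rule sum.cong)
    fix m assume "m \<in> Poly_Mapping.keys p"
    show "Poly_Mapping.lookup p m * (\<Prod>i\<in>Poly_Mapping.keys m. 0 ^ Poly_Mapping.lookup m i)
        = (if m = 0 then Poly_Mapping.lookup p m else 0)"
    proof (cases "m = 0")
      case False
      then obtain i where "i \<in> Poly_Mapping.keys m"
        using keys_eq_empty by blast
      then show ?thesis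
        using False by (subst prod_zero) (auto simp: in_keys_iff)
    qed simp
  qed simp
  also have "\<dots> = Poly_Mapping.lookup p 0"
    by (simp add: sum.delta in_keys_iff)
  finally show ?thesis .
qed

lemma binomial_sum_mass_action:
  assumes "\<And>r y y'. (r, y, y') \<in> set R \<Longrightarrow> y \<notin> {y1, y2} \<Longrightarrow> amount I y' = amount I y"
    and "Poly_Mapping.keys y1 \<subseteq> {..<n}" "Poly_Mapping.keys y2 \<subseteq> {..<n}"
  shows "is_binomial (\<Sum>i\<in>I. mass_action k R i) \<and> pvars (\<Sum>i\<in>I. mass_action k R i) \<subseteq> {..<n}"
proof
  have keys: "Poly_Mapping.keys (\<Sum>i\<in>I. mass_action k R i) \<subseteq> {y1, y2}"
    using assms(1) by (rule keys_sum_mass_action)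
  then have "card (Poly_Mapping.keys (\<Sum>i\<in>I. mass_action k R i)) \<le> card {y1, y2}"
    by (intro card_mono) simp_all
  also have "\<dots> \<le> 2"
    by (simp add: card_insert_le_m1)
  finally show "is_binomial (\<Sum>i\<in>I. mass_action k R i)"
    unfolding is_binomial_def .
  show "pvars (\<Sum>i\<in>I. mass_action k R i) \<subseteq> {..<n}"
    using keys assms(2,3) unfolding pvars_def by blast
qed

lemma has_toric_steady_statesI:
  assumes "\<forall>b\<in>B. is_binomial b \<and> pvars b \<subseteq> {..<s}"
    and "B \<subseteq> steady_state_ideal s k R"
    and "\<And>i. i < s \<Longrightarrow> mass_action k R i \<in> ideal_in s B"
    and "\<And>r y y'. (r, y, y') \<in> set R \<Longrightarrow> y \<noteq> 0"
  shows "has_toric_steady_states s k R"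
  unfolding has_toric_steady_states_def
proof (intro conjI exI)
  show "ideal_in s B = steady_state_ideal s k R"
    unfolding steady_state_ideal_def
  proof (rule ideal_in_eqI)
    show "B \<subseteq> ideal_in s {mass_action k R i |i. i < s}"
      using assms(2) unfolding steady_state_ideal_def .
    show "{mass_action k R i |i. i < s} \<subseteq> ideal_in s B"
      using assms(3) by blast
  qed
  show "\<forall>p\<in>steady_state_ideal s k R. peval p (\<lambda>_. 0) = 0"
  proof
    fix p assume "p \<in> steady_state_ideal s k R"
    then have "Poly_Mapping.lookup p 0 = 0"
      unfolding steady_state_ideal_def
    proof (rule lookup_ideal_in_0)
      fix g assume "g \<in> {mass_action k R i |i. i < s}"
      then obtain i where "g = mass_action k R i"
        by blast
      then show "Poly_Mapping.lookup g 0 = 0"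
        using assms(4) by (simp add: lookup_mass_action_0)
    qed
    then show "peval p (\<lambda>_. 0) = 0"
      by (simp add: peval_0)
  qed
qed (use assms(1) in auto)

lemmas erk_species_defs = RAF_def pRAF_def MEK_def pMEK_def ppMEK_def ERK_def pERK_def ppERK_def
  RAS_def RAFPH_def PH_def PH2_def RAS_RAF_def MEK_pRAF_def pMEK_pRAF_def ERK_ppMEK_def
  pERK_ppMEK_def RAF_RAFPH_def ppMEK_PH_def pMEK_PH_def ppERK_PH_def pERK_PH_def pRAF_ppERK_def
  Z_PH2_def Z_def

definition erk_binomial_groups :: "(nat set \<times> (nat \<Rightarrow>\<^sub>0 nat) \<times> (nat \<Rightarrow>\<^sub>0 nat)) list" where
  "erk_binomial_groups = [
    ({12}, RAF + RAS, RAS_RAF), ({13}, MEK + pRAF, MEK_pRAF), ({14}, pMEK + pRAF, pMEK_pRAF),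
    ({15}, ERK + ppMEK, ERK_ppMEK), ({16}, pERK + ppMEK, pERK_ppMEK), ({17}, pRAF + RAFPH, RAF_RAFPH),
    ({18}, ppMEK + PH, ppMEK_PH), ({19}, pMEK + PH, pMEK_PH), ({20}, ppERK + PH, ppERK_PH),
    ({21}, pERK + PH, pERK_PH), ({22}, pRAF + ppERK, pRAF_ppERK), ({23}, Z + PH2, Z_PH2),
    ({0, 12}, RAS_RAF, RAF_RAFPH), ({2, 13}, MEK_pRAF, pMEK_PH), ({4, 15, 16, 18}, pMEK_pRAF, ppMEK_PH),
    ({5, 15}, ERK_ppMEK, pERK_PH), ({7, 20, 22}, pERK_ppMEK, ppERK_PH), ({23, 24}, pRAF_ppERK, Z_PH2)]"

text \<open>Totals of RAS, RAFPH, PH2, PH, RAF, MEK and ERK.\<close>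
definition erk_conservation_laws :: "nat set list" where
  "erk_conservation_laws = [{8, 12}, {9, 17}, {11, 23}, {10, 18, 19, 20, 21},
    {0, 1, 12, 13, 14, 17, 22, 23, 24}, {2, 3, 4, 13, 14, 15, 16, 18, 19}, {5, 6, 7, 15, 16, 20, 21, 22}]"

lemma lookup_sp: "Poly_Mapping.lookup (sp a) i = (if a = i then 1 else 0)"
  by (simp add: sp_def lookup_single when_def)

lemma amount_sp [simp]: "finite I \<Longrightarrow> amount I (sp a) = (if a \<in> I then 1 else 0)"
  by (simp add: amount_def lookup_sp)

lemma keys_sp [simp]: "Poly_Mapping.keys (sp a) = {a}"
  by (simp add: sp_def)

lemma keys_sp_add_sp [simp]: "Poly_Mapping.keys (sp a + sp b) = {a, b}"
  by (auto simp: in_keys_iff lookup_add lookup_sp split: if_splits)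

lemma erk_binomial_groups_two_sources:
  assumes "(I, y1, y2) \<in> set erk_binomial_groups" "(r, y, y') \<in> set erk_reactions" "y \<notin> {y1, y2}"
  shows "amount I y' = amount I y"
proof -
  have "\<forall>(I, y1, y2)\<in>set erk_binomial_groups. \<forall>(r, y, y')\<in>set erk_reactions.
      amount I y' = amount I y \<or> y = y1 \<or> y = y2"
    by (simp add: erk_binomial_groups_def erk_reactions_def erk_species_defs)
  then have "\<forall>(r, y, y')\<in>set erk_reactions. amount I y' = amount I y \<or> y = y1 \<or> y = y2"
    using assms(1) by fastforce
  then show ?thesis
    using assms(2,3) by auto
qed

lemma erk_conservation_laws_conserved:
  assumes "I \<in> set erk_conservation_laws" "(r, y, y') \<in> set erk_reactions"
  shows "amount I y' = amount I y"
proof -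
  have "\<forall>I\<in>set erk_conservation_laws. \<forall>(r, y, y')\<in>set erk_reactions. amount I y' = amount I y"
    by (simp add: erk_conservation_laws_def erk_reactions_def erk_species_defs)
  then have "\<forall>(r, y, y')\<in>set erk_reactions. amount I y' = amount I y"
    using assms(1) by blast
  then show ?thesis
    using assms(2) by auto
qed

definition erk_binomials :: "(nat \<Rightarrow> real) \<Rightarrow> mpoly set" where
  "erk_binomials k = (\<lambda>(I, y1, y2). \<Sum>i\<in>I. mass_action k erk_reactions i) ` set erk_binomial_groups"

lemma erk_binomials_binomial: "\<forall>b\<in>erk_binomials k. is_binomial b \<and> pvars b \<subseteq> {..<num_species}"
proof
  fix b assume "b \<in> erk_binomials k"
  then obtain I y1 y2 where group: "(I, y1, y2) \<in> set erk_binomial_groups"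
    and b: "b = (\<Sum>i\<in>I. mass_action k erk_reactions i)"
    unfolding erk_binomials_def by auto
  have "Poly_Mapping.keys y1 \<subseteq> {..<num_species} \<and> Poly_Mapping.keys y2 \<subseteq> {..<num_species}"
    using group by (auto simp: erk_binomial_groups_def erk_species_defs num_species_def)
  then show "is_binomial b \<and> pvars b \<subseteq> {..<num_species}"
    unfolding b using erk_binomial_groups_two_sources[OF group]
    by (intro binomial_sum_mass_action) auto
qed

lemma sum_erk_group_in_ideal:
  assumes "I \<in> fst ` set erk_binomial_groups \<union> set erk_conservation_laws"
  shows "(\<Sum>i\<in>I. mass_action k erk_reactions i) \<in> ideal_in num_species (erk_binomials k)"
  using assms
proof
  assume "I \<in> fst ` set erk_binomial_groups"
  then show ?thesis
    unfolding erk_binomials_def by (force intro: ideal_in_generator)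
next
  assume "I \<in> set erk_conservation_laws"
  then have "(\<Sum>i\<in>I. mass_action k erk_reactions i) = 0"
    by (intro sum_mass_action_eq_0 erk_conservation_laws_conserved)
  then show ?thesis
    by (simp add: ideal_in_zero)
qed

lemma erk_species_in_ideal_by_group:
  assumes "I \<in> fst ` set erk_binomial_groups \<union> set erk_conservation_laws" "i \<in> I"
    and "\<And>j. j \<in> I - {i} \<Longrightarrow> mass_action k erk_reactions j \<in> ideal_in num_species (erk_binomials k)"
  shows "mass_action k erk_reactions i \<in> ideal_in num_species (erk_binomials k)"
proof (rule ideal_in_summand[OF _ assms(2) sum_erk_group_in_ideal[OF assms(1)] assms(3)])
  show "finite I"
    using assms(1) by (auto simp: erk_binomial_groups_def erk_conservation_laws_def)
qed

lemma erk_complex_in_ideal: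
  assumes "i \<in> {12..23}"
  shows "mass_action k erk_reactions i \<in> ideal_in num_species (erk_binomials k)"
proof -
  have "i = 12 \<or> i = 13 \<or> i = 14 \<or> i = 15 \<or> i = 16 \<or> i = 17 \<or>
      i = 18 \<or> i = 19 \<or> i = 20 \<or> i = 21 \<or> i = 22 \<or> i = 23"
    using assms unfolding atLeastAtMost_iff by presburger
  then have "{i} \<in> fst ` set erk_binomial_groups \<union> set erk_conservation_laws"
    by (elim disjE) (simp_all add: erk_binomial_groups_def)
  then show ?thesis
    by (rule erk_species_in_ideal_by_group) simp_all
qed

lemma erk_species_in_ideal:
  assumes "i < num_species"
  shows "mass_action k erk_reactions i \<in> ideal_in num_species (erk_binomials k)"
proof -
  let ?f = "mass_action k erk_reactions" and ?J = "ideal_in num_species (erk_binomials k)"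
  have substrates: "?f 0 \<in> ?J" "?f 2 \<in> ?J" "?f 4 \<in> ?J" "?f 5 \<in> ?J" "?f 7 \<in> ?J" "?f 24 \<in> ?J"
  proof -
    show "?f 0 \<in> ?J"
      by (rule erk_species_in_ideal_by_group[of "{0, 12}"])
        (auto simp: erk_binomial_groups_def erk_complex_in_ideal)
    show "?f 2 \<in> ?J"
      by (rule erk_species_in_ideal_by_group[of "{2, 13}"])
        (auto simp: erk_binomial_groups_def erk_complex_in_ideal)
    show "?f 4 \<in> ?J"
      by (rule erk_species_in_ideal_by_group[of "{4, 15, 16, 18}"])
        (auto simp: erk_binomial_groups_def erk_complex_in_ideal)
    show "?f 5 \<in> ?J"
      by (rule erk_species_in_ideal_by_group[of "{5, 15}"])
        (auto simp: erk_binomial_groups_def erk_complex_in_ideal)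
    show "?f 7 \<in> ?J"
      by (rule erk_species_in_ideal_by_group[of "{7, 20, 22}"])
        (auto simp: erk_binomial_groups_def erk_complex_in_ideal)
    show "?f 24 \<in> ?J"
      by (rule erk_species_in_ideal_by_group[of "{23, 24}"])
        (auto simp: erk_binomial_groups_def erk_complex_in_ideal)
  qed
  have conserved: "?f 8 \<in> ?J" "?f 9 \<in> ?J" "?f 10 \<in> ?J" "?f 11 \<in> ?J" "?f 1 \<in> ?J" "?f 3 \<in> ?J" "?f 6 \<in> ?J"
  proof -
    show "?f 8 \<in> ?J"
      by (rule erk_species_in_ideal_by_group[of "{8, 12}"])
        (auto simp: erk_conservation_laws_def erk_complex_in_ideal substrates)
    show "?f 9 \<in> ?J"
      by (rule erk_species_in_ideal_by_group[of "{9, 17}"])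
        (auto simp: erk_conservation_laws_def erk_complex_in_ideal substrates)
    show "?f 10 \<in> ?J"
      by (rule erk_species_in_ideal_by_group[of "{10, 18, 19, 20, 21}"])
        (auto simp: erk_conservation_laws_def erk_complex_in_ideal substrates)
    show "?f 11 \<in> ?J"
      by (rule erk_species_in_ideal_by_group[of "{11, 23}"])
        (auto simp: erk_conservation_laws_def erk_complex_in_ideal substrates)
    show "?f 1 \<in> ?J"
      by (rule erk_species_in_ideal_by_group[of "{0, 1, 12, 13, 14, 17, 22, 23, 24}"])
        (auto simp: erk_conservation_laws_def erk_complex_in_ideal substrates)
    show "?f 3 \<in> ?J"
      by (rule erk_species_in_ideal_by_group[of "{2, 3, 4, 13, 14, 15, 16, 18, 19}"])
        (auto simp: erk_conservation_laws_def erk_complex_in_ideal substrates)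
    show "?f 6 \<in> ?J"
      by (rule erk_species_in_ideal_by_group[of "{5, 6, 7, 15, 16, 20, 21, 22}"])
        (auto simp: erk_conservation_laws_def erk_complex_in_ideal substrates)
  qed
  have "i \<in> {12..23} \<or> i \<in> {0, 1, 2, 3, 4, 5, 6, 7, 8, 9, 10, 11, 24}"
    using assms unfolding num_species_def atLeastAtMost_iff insert_iff empty_iff by presburger
  then show ?thesis
    using erk_complex_in_ideal substrates conserved by auto
qed

lemma erk_binomials_subset_steady_state_ideal:
  "erk_binomials k \<subseteq> steady_state_ideal num_species k erk_reactions"
proof
  fix b assume "b \<in> erk_binomials k"
  then obtain I y1 y2 where group: "(I, y1, y2) \<in> set erk_binomial_groups"
    and b: "b = (\<Sum>i\<in>I. mass_action k erk_reactions i)"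
    unfolding erk_binomials_def by auto
  have "finite I \<and> I \<subseteq> {..<num_species}"
    using group by (auto simp: erk_binomial_groups_def num_species_def)
  then show "b \<in> steady_state_ideal num_species k erk_reactions"
    unfolding b steady_state_ideal_def by (blast intro: ideal_in_sum ideal_in_generator)
qed

lemma erk_reactions_sources_nonzero: "(r, y, y') \<in> set erk_reactions \<Longrightarrow> y \<noteq> 0"
proof -
  have "sp a \<noteq> 0" "sp a + sp b \<noteq> 0" for a b
    by (metis keys_sp keys_zero insert_not_empty, metis keys_sp_add_sp keys_zero insert_not_empty)
  then show "(r, y, y') \<in> set erk_reactions \<Longrightarrow> y \<noteq> 0"
    by (auto simp: erk_reactions_def erk_species_defs)
qed

theorem mainTheorem5:
  fixes k :: "nat \<Rightarrow> real"
  assumes "\<forall>i \<in> {1..36}. 0 < k i"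
  shows "has_toric_steady_states num_species k erk_reactions"
proof (rule has_toric_steady_statesI)
  show "\<forall>b\<in>erk_binomials k. is_binomial b \<and> pvars b \<subseteq> {..<num_species}"
    by (rule erk_binomials_binomial)
  show "erk_binomials k \<subseteq> steady_state_ideal num_species k erk_reactions"
    by (rule erk_binomials_subset_steady_state_ideal)
  show "mass_action k erk_reactions i \<in> ideal_in num_species (erk_binomials k)"
    if "i < num_species" for i
    using that by (rule erk_species_in_ideal)
  show "y \<noteq> 0" if "(r, y, y') \<in> set erk_reactions" for r y y'
    using that by (rule erk_reactions_sources_nonzero)
qed

end
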